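(* Let $p$ be a prime, let $\alpha\in\mathbb{N}$, $m,n\in\mathbb{Z}^+$ and $r\in\mathbb{Z}$. Then $$\operatorname{ord}_p\Bigg(\frac{p^{m-1}}m\sum_{k=0}^n\binom nk(-1)^kB_m\Big(\Big\lfloor\frac{k-r}{p^{\alpha}}\Big\rfloor\Big)\Bigg)\geqslant\sum_{i=\alpha}^{\infty}\Big\lfloor\frac{n-1}{p^i}\Big\rfloor+\tau_p\big(\{r-1\}_{p^{\alpha-1}},\{n-r\}_{p^{\alpha-1}}\big),$$ where $B_m(x)$ is the $m$-th Bernoulli polynomial.
   Context: $\operatorname{ord}_p$ is the $p$-adic order ($\operatorname{ord}_p(0)=+\infty$). For an integer $a$ and positive real $m'$, $\{a\}_{m'}$ is the unique number in $[0,m')$ with $a-\{a\}_{m'}\in m'\mathbb{Z}$. $\tau_p(a,b)$ is the number of carries when adding $a,b\in\mathbb{N}$ in base $p$. *)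

theory Defs
  imports Complex_Main "HOL-Computational_Algebra.Computational_Algebra" "HOL-Library.Extended_Real"
begin

text \<open>Bernoulli numbers (convention B_1 = -1/2):
  B_0 = 1 and sum_{k=0}^{n} C(n+1,k) B_k = 0 for n >= 1.\<close>
fun bernoulli :: "nat \<Rightarrow> rat" where
  "bernoulli n = (if n = 0 then 1
     else - (\<Sum>k<n. of_nat ((n + 1) choose k) * bernoulli k) / of_nat (n + 1))"

declare bernoulli.simps [simp del]

definition bernpoly :: "nat \<Rightarrow> rat \<Rightarrow> rat" where
  "bernpoly m x = (\<Sum>k\<le>m. of_nat (m choose k) * bernoulli k * x ^ (m - k))"

definition padic_ord :: "nat \<Rightarrow> rat \<Rightarrow> ereal" where
  "padic_ord p q = (if q = 0 then \<infinity>
     else ereal (real (multiplicity (int p) (fst (quotient_of q)))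
                 - real (multiplicity (int p) (snd (quotient_of q)))))"

text \<open>{a}_{m'}: the unique number in [0,m') with a - {a}_{m'} in m' Z.\<close>
definition lres :: "int \<Rightarrow> real \<Rightarrow> real" where
  "lres a m' = of_int a - m' * of_int \<lfloor>of_int a / m'\<rfloor>"

text \<open>Number of carries when adding a and b in base p: a carry out of digit
  position i occurs iff (a mod p^(i+1)) + (b mod p^(i+1)) >= p^(i+1).\<close>
definition carries :: "nat \<Rightarrow> nat \<Rightarrow> nat \<Rightarrow> nat" where
  "carries p a b = card {i. a mod p ^ (i + 1) + b mod p ^ (i + 1) \<ge> p ^ (i + 1)}"

end

theory Submission
  imports Defs
begin

text \<open>Summation by parts together with \<open>B_m(x + 1) - B_m(x) = m x^(m-1)\<close> turns \<open>p^(m-1)/m\<close>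
  times the sum into an integer combination of the moments
  \<open>\<Sum>\<^sub>j (-1)^j C(n-1, j) ((j - r + 1)/p^(\<alpha>-1))^e\<close>, taken over \<open>j \<equiv> r - 1 (mod p^\<alpha>)\<close>,
  so it suffices to bound the \<open>p\<close>-adic orders of these moments. For \<open>\<alpha> \<le> 1\<close> a recursion in \<open>e\<close>
  reduces this to \<open>e = 0\<close>, where the vanishing of finite differences (\<open>\<alpha> = 0\<close>) or Fleck's
  congruence (\<open>\<alpha> = 1\<close>) applies. For the step from \<open>\<alpha>\<close> to \<open>\<alpha> + 1\<close> write \<open>n - 1 = N\<^sub>0 + p^\<alpha> N'\<close>
  with \<open>N\<^sub>0 < p^\<alpha>\<close> and expand
  \<open>(1 - x)^(n-1) = (1 - x)^N\<^sub>0 ((1 - x^p)^(p^(\<alpha>-1)) + p^\<alpha> G)^N'\<close>. The term free of \<open>G\<close> reduces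
  to moments modulo \<open>p^\<alpha>\<close>, and Kummer's bound for \<open>C(N\<^sub>0, d)\<close> supplies the missing carry;
  in the terms with \<open>G^i\<close>, \<open>i \<ge> 1\<close>, the factor \<open>p^(\<alpha> i) C(N', i)\<close> makes up for the
  decrease of \<open>ord\<^sub>p N'!\<close>.\<close>

section \<open>Moments over residue classes\<close>

text \<open>\<open>class_moment p a A c e\<close> is the sum of \<open>[x^j] A \<cdot> ((j - c)/p^(a-1))^e\<close> over
  \<open>j \<equiv> c (mod p^a)\<close>; writing the weight as \<open>p (j - c)/p^a\<close> makes \<open>a = 0\<close> meaningful.\<close>

definition class_weight :: "nat \<Rightarrow> nat \<Rightarrow> int \<Rightarrow> nat \<Rightarrow> nat \<Rightarrow> int" where
  "class_weight p a c e j =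
     (if int p ^ a dvd int j - c then (int p * ((int j - c) div int p ^ a)) ^ e else 0)"

definition class_moment :: "nat \<Rightarrow> nat \<Rightarrow> int poly \<Rightarrow> int \<Rightarrow> nat \<Rightarrow> int" where
  "class_moment p a A c e = (\<Sum>j\<le>degree A. coeff A j * class_weight p a c e j)"

lemma class_moment_eq_sum:
  "degree A \<le> D \<Longrightarrow> class_moment p a A c e = (\<Sum>j\<le>D. coeff A j * class_weight p a c e j)"
  unfolding class_moment_def by (rule sum.mono_neutral_left) (auto simp: coeff_eq_0)

lemma class_moment_0: "class_moment p a 0 c e = 0"
  by (simp add: class_moment_def)

lemma class_moment_add:
  "class_moment p a (A + B) c e = class_moment p a A c e + class_moment p a B c e"
proof -
  let ?D = "max (degree A) (degree B)"
  have "degree (A + B) \<le> ?D" by (rule degree_add_le) auto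
  then show ?thesis
    by (simp add: class_moment_eq_sum[of _ ?D] sum.distrib algebra_simps)
qed

lemma class_moment_smult: "class_moment p a (smult b A) c e = b * class_moment p a A c e"
  using degree_smult_le[of b A]
  by (simp add: class_moment_eq_sum[of _ "degree A"] class_moment_def sum_distrib_left algebra_simps)

lemma class_moment_sum:
  "finite I \<Longrightarrow> class_moment p a (\<Sum>i\<in>I. f i) c e = (\<Sum>i\<in>I. class_moment p a (f i) c e)"
  by (induction I rule: finite_induct) (simp_all add: class_moment_0 class_moment_add)

lemma class_moment_monom_mult:
  "class_moment p a (monom 1 d * A) c e = class_moment p a A (c - int d) e"
proof -
  let ?D = "degree A"
  have "degree (monom 1 d * A) \<le> ?D + d"
    using degree_mult_le[of "monom 1 d" A] degree_monom_le[of "1::int" d] by linarith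
  then have "class_moment p a (monom 1 d * A) c e
      = (\<Sum>j\<le>?D + d. coeff (monom 1 d * A) j * class_weight p a c e j)"
    by (rule class_moment_eq_sum)
  also have "\<dots> = (\<Sum>j\<in>{0 + d..?D + d}. coeff A (j - d) * class_weight p a c e j)"
    by (rule sum.mono_neutral_cong_right) (auto simp: coeff_monom_mult)
  also have "\<dots> = (\<Sum>i\<le>?D. coeff A i * class_weight p a c e (i + d))"
    by (simp only: sum.shift_bounds_cl_nat_ivl atLeast0AtMost) simp
  also have "\<dots> = class_moment p a A (c - int d) e"
    unfolding class_moment_def by (rule sum.cong) (auto simp: class_weight_def algebra_simps)
  finally show ?thesis .
qed

lemma class_moment_mult:
  "class_moment p a (B * A) c e = (\<Sum>d\<le>degree B. coeff B d * class_moment p a A (c - int d) e)"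
proof -
  have "B * A = (\<Sum>d\<le>degree B. smult (coeff B d) (monom 1 d * A))"
    by (subst poly_as_sum_of_monoms[symmetric, of B])
       (simp add: sum_distrib_right smult_monom_mult)
  then show ?thesis by (simp add: class_moment_sum class_moment_smult class_moment_monom_mult)
qed

lemma coeff_pcompose_monom:
  fixes A :: "'a::comm_semiring_1 poly"
  assumes "q > 0"
  shows "coeff (A \<circ>\<^sub>p monom 1 q) j = (if q dvd j then coeff A (j div q) else 0)"
proof (induction A arbitrary: j rule: pCons_induct)
  case (pCons a A)
  have eq: "coeff (pCons a A \<circ>\<^sub>p monom 1 q) j = coeff [:a:] j + coeff (monom 1 q * (A \<circ>\<^sub>p monom 1 q)) j"
    by (simp add: pcompose_pCons)
  show ?case
  proof (cases "j < q")
    case True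
    then have "coeff (monom 1 q * (A \<circ>\<^sub>p monom 1 q)) j = 0"
      by (simp add: coeff_monom_mult)
    with True show ?thesis
      using assms by (cases "j = 0") (auto simp: eq coeff_pCons split: nat.split dest: dvd_imp_le)
  next
    case False
    then have "q dvd j \<longleftrightarrow> q dvd (j - q)" and "j div q = Suc ((j - q) div q)"
      using assms by (auto simp: dvd_minus_self le_div_geq)
    with False show ?thesis
      using assms by (simp add: eq coeff_monom_mult pCons.IH coeff_pCons split: nat.split)
  qed
qed simp

lemma sum_atMost_multiples:
  fixes g :: "nat \<Rightarrow> 'a::comm_monoid_add"
  assumes "q > 0"
  shows "(\<Sum>j\<le>D * q. if q dvd j then g (j div q) else 0) = (\<Sum>i\<le>D. g i)"
proof -
  have "{j\<in>{..D * q}. q dvd j} = (\<lambda>i. q * i) ` {..D}"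
    using assms by (auto simp: mult.commute)
  then have "(\<Sum>j\<le>D * q. if q dvd j then g (j div q) else 0) = (\<Sum>j\<in>(\<lambda>i. q * i) ` {..D}. g (j div q))"
    by (simp add: sum.inter_filter[symmetric])
  also have "\<dots> = (\<Sum>i\<le>D. g i)"
    using assms by (subst sum.reindex) (auto simp: inj_on_def)
  finally show ?thesis .
qed

lemma class_weight_Suc_mult:
  assumes "p > 1"
  shows "class_weight p (Suc a) c e (p * i) =
           (if int p dvd c then class_weight p a (c div int p) e i else 0)"
proof (cases "int p dvd c")
  case True
  then obtain c' where c: "c = int p * c'" by blast
  have "int (p * i) - c = int p * (int i - c')" by (simp add: c algebra_simps)
  with assms show ?thesis by (simp add: class_weight_def c)
next
  case False
  then have "\<not> int p dvd int (p * i) - c"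
    by (metis dvd_diff_commute dvd_triv_left of_nat_mult zdvd_zdiffD)
  then have "\<not> int p ^ Suc a dvd int (p * i) - c"
    using dvd_trans[of "int p" "int p ^ Suc a"] by auto
  with False show ?thesis by (simp add: class_weight_def)
qed

lemma class_moment_pcompose_monom:
  assumes "p > 1"
  shows "class_moment p (Suc a) (A \<circ>\<^sub>p monom 1 p) c e =
           (if int p dvd c then class_moment p a A (c div int p) e else 0)"
proof -
  have p0: "p > 0" using assms by simp
  have "class_moment p (Suc a) (A \<circ>\<^sub>p monom 1 p) c e =
        (\<Sum>j\<le>degree A * p. if p dvd j
           then coeff A (j div p) * class_weight p (Suc a) c e (p * (j div p)) else 0)"
    unfolding class_moment_def
    by (rule sum.cong) (auto simp: coeff_pcompose_monom[OF p0] degree_pcompose degree_monom_eq)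
  also have "\<dots> = (\<Sum>i\<le>degree A. coeff A i * class_weight p (Suc a) c e (p * i))"
    by (rule sum_atMost_multiples[OF p0])
  also have "\<dots> = (if int p dvd c then class_moment p a A (c div int p) e else 0)"
    by (simp add: class_weight_Suc_mult[OF assms] class_moment_def)
  finally show ?thesis .
qed

section \<open>Legendre's formula and borrows\<close>

lemma multiplicity_fact_Suc:
  assumes "prime p"
  shows "multiplicity p (fact (Suc M) :: nat) = multiplicity p (Suc M) + multiplicity p (fact M :: nat)"
  using assms prime_elem_multiplicity_mult_distrib[of p "Suc M" "fact M"] by simp

lemma card_prime_power_dvd:
  assumes "prime p" "m > 0" "m \<le> B"
  shows "card {k\<in>{1..B}. p ^ k dvd m} = multiplicity p m"
proof -
  have "\<not> is_unit p" using assms(1) by auto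
  then have iff: "p ^ k dvd m \<longleftrightarrow> k \<le> multiplicity p m" for k
    using power_dvd_iff_le_multiplicity[of m p k] assms(2) by simp
  have "multiplicity p m < p ^ multiplicity p m"
    using power_gt_expt[of p] prime_gt_1_nat[OF assms(1)] by simp
  also have "\<dots> \<le> m" using multiplicity_dvd assms(2) by (rule dvd_imp_le)
  finally have "{k\<in>{1..B}. p ^ k dvd m} = {1..multiplicity p m}"
    unfolding iff using assms(3) by auto
  then show ?thesis by simp
qed

theorem legendre_multiplicity_fact:
  assumes "prime p" "M \<le> B"
  shows "multiplicity p (fact M :: nat) = (\<Sum>k\<in>{1..B}. M div p ^ k)"
  using assms(2)
proof (induction M)
  case (Suc M)
  have "(\<Sum>k\<in>{1..B}. Suc M div p ^ k) = (\<Sum>k\<in>{1..B}. M div p ^ k + of_bool (p ^ k dvd Suc M))"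
    using prime_gt_0_nat[OF assms(1)] by (intro sum.cong) (auto simp: div_Suc dvd_eq_mod_eq_0)
  also have "\<dots> = (\<Sum>k\<in>{1..B}. M div p ^ k) + card {k\<in>{1..B}. p ^ k dvd Suc M}"
    by (simp add: sum.distrib Int_def)
  also have "card {k\<in>{1..B}. p ^ k dvd Suc M} = multiplicity p (Suc M)"
    using Suc.prems by (intro card_prime_power_dvd assms(1)) auto
  finally show ?case
    using Suc by (simp only: multiplicity_fact_Suc[OF assms(1)])
qed simp

lemma multiplicity_fact_div:
  assumes "prime p"
  shows "multiplicity p (fact M :: nat) = M div p + multiplicity p (fact (M div p) :: nat)"
proof -
  have "multiplicity p (fact M :: nat) = (\<Sum>k\<in>{1..Suc M}. M div p ^ k)"
    using assms by (rule legendre_multiplicity_fact) simp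
  also have "\<dots> = M div p + (\<Sum>k\<in>{1..M}. M div p ^ Suc k)"
    by (simp only: sum.atLeast_Suc_atMost[of 1 "Suc M"] sum.atLeast_Suc_atMost_Suc_shift)
       (simp_all add: o_def)
  also have "(\<Sum>k\<in>{1..M}. M div p ^ Suc k) = (\<Sum>k\<in>{1..M}. M div p div p ^ k)"
    by (simp add: div_mult2_eq)
  also have "\<dots> = multiplicity p (fact (M div p) :: nat)"
    using assms by (rule legendre_multiplicity_fact[symmetric]) simp
  finally show ?thesis .
qed

lemma multiplicity_fact_le:
  assumes "prime p" "M \<ge> 1"
  shows "multiplicity p (fact M :: nat) \<le> (M - 1) div (p - 1)"
proof -
  have p1: "p > 1" using assms(1) by (rule prime_gt_1_nat)
  have "(p - 1) * multiplicity p (fact M :: nat) \<le> M - 1"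
    using assms(2)
  proof (induction M rule: less_induct)
    case (less M)
    show ?case
    proof (cases "M div p = 0")
      case True
      then show ?thesis using multiplicity_fact_div[OF assms(1), of M] by simp
    next
      case False
      have "(p - 1) * multiplicity p (fact M :: nat)
          = (p - 1) * (M div p) + (p - 1) * multiplicity p (fact (M div p) :: nat)"
        by (subst multiplicity_fact_div[OF assms(1)]) (simp add: algebra_simps)
      also have "\<dots> \<le> (p - 1) * (M div p) + (M div p - 1)"
        using less.IH[of "M div p"] False p1 less.prems by simp
      also have "\<dots> = p * (M div p) - 1"
        using False p1 by (simp add: algebra_simps)
      also have "\<dots> \<le> M - 1"
        by (simp add: diff_le_mono)
      finally show ?thesis .
    qed
  qed
  with p1 show ?thesis
    by (simp add: less_eq_div_iff_mult_less_eq mult.commute)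
qed

lemma multiplicity_fact_choose:
  assumes "prime p" "k \<le> n"
  shows "multiplicity p (fact n :: nat)
           = multiplicity p (n choose k) + multiplicity p (fact k :: nat)
               + multiplicity p (fact (n - k) :: nat)"
proof -
  have "(fact n :: nat) = fact k * fact (n - k) * (n choose k)"
    by (rule binomial_fact_lemma[OF assms(2), symmetric])
  moreover have "(n choose k) \<noteq> 0" using assms(2) by simp
  ultimately show ?thesis
    using assms(1) by (simp add: prime_elem_multiplicity_mult_distrib)
qed

lemma div_split_borrow:
  fixes q d N :: nat
  assumes "q > 0" "d \<le> N"
  shows "N div q = d div q + (N - d) div q + of_bool (N mod q < d mod q)"
proof -
  define e where "e = N - d"
  have N: "N = d + e" using assms(2) by (simp add: e_def)
  define s where "s = d mod q + e mod q"
  have Ns: "N mod q = s mod q" by (simp add: s_def N mod_add_eq)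
  have "s div q = of_bool (N mod q < d mod q)"
  proof (cases "s < q")
    case True
    then show ?thesis by (simp add: Ns s_def)
  next
    case False
    have "d mod q < q" "e mod q < q" using assms(1) by simp_all
    then have "s - q < q" unfolding s_def by linarith
    with False assms(1) have "s div q = 1" "N mod q = s - q"
      by (simp_all only: Ns le_div_geq le_mod_geq not_less div_less mod_less)
    moreover from \<open>N mod q = s - q\<close> \<open>e mod q < q\<close> False have "N mod q < d mod q"
      unfolding s_def by linarith
    ultimately show ?thesis by simp
  qed
  moreover have "N div q = d div q + e div q + s div q"
    unfolding N s_def by (rule div_add1_eq)
  ultimately show ?thesis by (simp add: e_def)
qed

text \<open>\<open>borrows p b s N\<close> counts the borrows out of the lowest \<open>b\<close> base-\<open>p\<close> digits in the
  subtraction \<open>N - s\<close>: there is a borrow out of digit \<open>k - 1\<close> iff \<open>N mod p^k < s mod p^k\<close>.\<close>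

definition borrows :: "nat \<Rightarrow> nat \<Rightarrow> int \<Rightarrow> int \<Rightarrow> nat" where
  "borrows p b s N = card {k\<in>{1..b}. N mod int p ^ k < s mod int p ^ k}"

lemma borrows_le: "borrows p b s N \<le> b"
proof -
  have "borrows p b s N \<le> card {1..b}" unfolding borrows_def by (rule card_mono) auto
  then show ?thesis by simp
qed

lemma borrows_of_nat: "borrows p b (int d) (int N) = card {k\<in>{1..b}. N mod p ^ k < d mod p ^ k}"
proof -
  have "int N mod int p ^ k < int d mod int p ^ k \<longleftrightarrow> N mod p ^ k < d mod p ^ k" for k
    by (metis of_nat_less_iff of_nat_power zmod_int)
  then show ?thesis by (simp add: borrows_def)
qed

theorem prime_power_borrows_dvd_choose:
  assumes "prime p" "d \<le> N"
  shows "int p ^ borrows p b (int d) (int N) dvd int (N choose d)"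
proof -
  have p0: "p > 0" using assms(1) by (rule prime_gt_0_nat)
  define B where "B = max N b"
  let ?borrow = "\<lambda>k. N mod p ^ k < d mod p ^ k"
  have "multiplicity p (fact N :: nat) = (\<Sum>k\<in>{1..B}. N div p ^ k)"
    using assms(1) by (rule legendre_multiplicity_fact) (simp add: B_def)
  also have "\<dots> = (\<Sum>k\<in>{1..B}. d div p ^ k + (N - d) div p ^ k + of_bool (?borrow k))"
    using p0 assms(2) by (intro sum.cong refl div_split_borrow) auto
  also have "\<dots> = multiplicity p (fact d :: nat) + multiplicity p (fact (N - d) :: nat)
                    + card {k\<in>{1..B}. ?borrow k}"
    using legendre_multiplicity_fact[OF assms(1), of d B]
      legendre_multiplicity_fact[OF assms(1), of "N - d" B] assms(2)
    by (simp add: sum.distrib Int_def B_def)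
  finally have "multiplicity p (N choose d) = card {k\<in>{1..B}. ?borrow k}"
    using multiplicity_fact_choose[OF assms] by simp
  then have "borrows p b (int d) (int N) \<le> multiplicity p (N choose d)"
    unfolding borrows_of_nat by (auto simp: B_def intro!: card_mono)
  then have "p ^ borrows p b (int d) (int N) dvd N choose d"
    by (meson le_imp_power_dvd multiplicity_dvd dvd_trans)
  then show ?thesis by (metis of_nat_dvd_iff of_nat_power)
qed

lemma borrows_Suc_split:
  fixes c d c' N N' M :: int
  assumes p1: "p > 1"
    and N: "int p ^ Suc a dvd N - N'"
    and M: "int p ^ a dvd M"
    and c: "c = d + int p * c'"
  shows "borrows p (Suc a) c N \<le> borrows p (Suc a) d N' + borrows p a c' M"
proof -
  let ?S = "{k\<in>{1..Suc a}. N mod int p ^ k < c mod int p ^ k}"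
  let ?S1 = "{k\<in>{1..Suc a}. N' mod int p ^ k < d mod int p ^ k}"
  let ?S2 = "{k\<in>{1..a}. M mod int p ^ k < c' mod int p ^ k}"
  have "?S \<subseteq> ?S1 \<union> Suc ` ?S2"
  proof
    fix k assume k: "k \<in> ?S"
    show "k \<in> ?S1 \<union> Suc ` ?S2"
    proof (cases "k \<in> ?S1")
      case False
      have "int p ^ k dvd int p ^ Suc a" using k by (intro le_imp_power_dvd) auto
      with N have "N mod int p ^ k = N' mod int p ^ k"
        using dvd_trans mod_eq_dvd_iff by blast
      with k False have "c mod int p ^ k \<noteq> d mod int p ^ k" by auto
      then have not_dvd: "\<not> int p ^ k dvd int p * c'"
        by (simp add: c mod_eq_dvd_iff)
      then have "k \<noteq> 1" by auto
      with k obtain k' where k': "k = Suc k'" "k' \<noteq> 0" by (cases k) auto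
      then have "\<not> int p ^ k' dvd c'" using not_dvd by auto
      then have "c' mod int p ^ k' > 0"
        using p1 by (simp add: dvd_eq_mod_eq_0 order_le_neq_trans)
      moreover have "int p ^ k' dvd int p ^ a" using k k' by (intro le_imp_power_dvd) auto
      then have "M mod int p ^ k' = 0" using M by (simp add: dvd_trans)
      ultimately have "k' \<in> ?S2" using k k' by auto
      with k' show ?thesis by blast
    qed simp
  qed
  then have "card ?S \<le> card (?S1 \<union> Suc ` ?S2)" by (intro card_mono) auto
  also have "\<dots> \<le> card ?S1 + card (Suc ` ?S2)" by (rule card_Un_le)
  also have "card (Suc ` ?S2) \<le> card ?S2" by (rule card_image_le) simp
  finally show ?thesis by (simp add: borrows_def)
qed

section \<open>Moments modulo \<open>p\<close>\<close>

lemma coeff_one_minus_x_power: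
  "coeff ([:1, -1:] ^ N :: 'a::comm_ring_1 poly) j = (-1) ^ j * of_nat (N choose j)"
proof (cases "j \<le> N")
  case False
  have "degree ([:1, -1:] ^ N :: 'a poly) \<le> 1 * N"
    by (rule order.trans[OF degree_power_le mult_le_mono1]) simp
  with False show ?thesis by (simp add: coeff_eq_0 binomial_eq_0)
qed (simp add: coeff_linear_poly_power)

definition alt_binomial_moment :: "int \<Rightarrow> nat \<Rightarrow> int \<Rightarrow> nat \<Rightarrow> int" where
  "alt_binomial_moment q N c e =
     (\<Sum>j\<le>N. if q dvd int j - c then (-1) ^ j * int (N choose j) * (int j - c) ^ e else 0)"

lemma class_moment_1_one_minus_x_power:
  "p > 0 \<Longrightarrow> class_moment p 1 ([:1, -1:] ^ N) c e = alt_binomial_moment (int p) N c e"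
  unfolding class_moment_def alt_binomial_moment_def degree_linear_power_neg
  by (intro sum.cong refl) (auto simp: class_weight_def coeff_one_minus_x_power)

lemma class_moment_0_one_minus_x_power:
  "class_moment p 0 ([:1, -1:] ^ N) c e = int p ^ e * alt_binomial_moment 1 N c e"
  unfolding class_moment_def alt_binomial_moment_def degree_linear_power_neg sum_distrib_left
  by (intro sum.cong refl) (auto simp: class_weight_def coeff_one_minus_x_power power_mult_distrib)

lemma alt_binomial_moment_Suc:
  "alt_binomial_moment q (Suc N) c (Suc e) =
     - int (Suc N) * alt_binomial_moment q N (c - 1) e - c * alt_binomial_moment q (Suc N) c e"
proof -
  define f where "f j = (if q dvd int j - c
    then (-1) ^ j * (int (Suc N choose j) * int j) * (int j - c) ^ e else 0)" for j
  have "alt_binomial_moment q (Suc N) c (Suc e) + c * alt_binomial_moment q (Suc N) c e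
      = (\<Sum>j\<le>Suc N. f j)"
    unfolding alt_binomial_moment_def sum_distrib_left sum.distrib[symmetric] f_def
    by (intro sum.cong refl) (auto simp: algebra_simps)
  also have "\<dots> = (\<Sum>i\<le>N. f (Suc i))"
    using sum.atMost_Suc_shift[of f N] by (simp add: f_def del: of_nat_Suc)
  also have "\<dots> = - int (Suc N) * alt_binomial_moment q N (c - 1) e"
    unfolding alt_binomial_moment_def sum_distrib_left
  proof (intro sum.cong refl)
    fix i
    have "int (Suc N choose Suc i) * int (Suc i) = int (Suc N) * int (N choose i)"
      by (metis Suc_times_binomial mult.commute of_nat_mult)
    moreover have "int (Suc i) - c = int i - (c - 1)" by simp
    ultimately show "f (Suc i) = - int (Suc N) * (if q dvd int i - (c - 1)
        then (-1) ^ i * int (N choose i) * (int i - (c - 1)) ^ e else 0)"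
      unfolding f_def by (simp add: algebra_simps)
  qed
  finally show ?thesis by (simp add: algebra_simps)
qed

lemma alt_binomial_moment_dvd:
  assumes "prime p"
    and dvd_0: "\<And>N c. int p ^ multiplicity p (fact N :: nat) dvd alt_binomial_moment q N c 0"
  shows "int p ^ multiplicity p (fact N :: nat) dvd alt_binomial_moment q N c e"
proof (induction e arbitrary: N c)
  case (Suc e)
  show ?case
  proof (cases N)
    case (Suc N')
    have "int p ^ multiplicity p (Suc N') dvd int (Suc N')"
      by (metis multiplicity_dvd of_nat_dvd_iff of_nat_power)
    then have "int p ^ multiplicity p (Suc N') * int p ^ multiplicity p (fact N' :: nat)
        dvd int (Suc N') * alt_binomial_moment q N' (c - 1) e"
      using Suc.IH by (rule mult_dvd_mono)
    then have "int p ^ multiplicity p (fact (Suc N') :: nat)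
        dvd int (Suc N') * alt_binomial_moment q N' (c - 1) e"
      by (simp only: multiplicity_fact_Suc[OF assms(1)] power_add)
    moreover have "int p ^ multiplicity p (fact (Suc N') :: nat)
        dvd c * alt_binomial_moment q (Suc N') c e"
      using Suc.IH[of "Suc N'" c] by (rule dvd_mult)
    ultimately show ?thesis
      unfolding Suc alt_binomial_moment_Suc
      by (metis dvd_diff dvd_minus_iff mult_minus_left)
  qed simp
qed (rule dvd_0)

lemma alt_binomial_moment_1_eq_0: "e < N \<Longrightarrow> alt_binomial_moment 1 N c e = 0"
proof (induction e arbitrary: N c)
  case 0
  then show ?case
    using choose_alternating_sum[of N] by (simp add: alt_binomial_moment_def mult.commute)
next
  case (Suc e)
  then obtain N' where "N = Suc N'" by (cases N) auto
  with Suc show ?case by (simp add: alt_binomial_moment_Suc)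
qed

lemma prime_dvd_alt_choose_pred_minus_1:
  assumes "prime p" "d \<le> p - 1"
  shows "int p dvd (-1) ^ d * int ((p - 1) choose d) - 1"
  using assms(2)
proof (induction d)
  case (Suc d)
  have p1: "p > 1" using assms(1) by (rule prime_gt_1_nat)
  have "int (p choose Suc d) = int ((p - 1) choose d) + int ((p - 1) choose Suc d)"
    using p1 by (metis Suc_diff_1 binomial_Suc_Suc of_nat_add zero_less_one order.strict_trans)
  then have eq: "(-1) ^ Suc d * int ((p - 1) choose Suc d) - 1
        = (-1) ^ Suc d * int (p choose Suc d) + ((-1) ^ d * int ((p - 1) choose d) - 1)"
    by (simp add: algebra_simps)
  have "p dvd p choose Suc d"
    using Suc.prems p1 assms(1) by (intro dvd_choose_prime) auto
  then have "int p dvd (-1) ^ Suc d * int (p choose Suc d)"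
    by simp
  with Suc show ?case
    unfolding eq by simp
qed simp

lemma sum_residue_indicator:
  assumes "p > 0"
  shows "(\<Sum>d\<le>p - 1. of_bool (int p dvd x + int d)) = (1::int)"
proof -
  have "{d\<in>{..p - 1}. int p dvd x + int d} = {nat ((- x) mod int p)}"
  proof (intro equalityI subsetI)
    fix d assume "d \<in> {d\<in>{..p - 1}. int p dvd x + int d}"
    then have "d < p" "int d mod int p = (- x) mod int p"
      using assms by (auto simp: mod_eq_dvd_iff add.commute)
    then show "d \<in> {nat ((- x) mod int p)}" by simp
  next
    fix d assume "d \<in> {nat ((- x) mod int p)}"
    then have "int d = (- x) mod int p" using assms by simp
    moreover from this have "d < p" using assms
      by (metis of_nat_less_iff pos_mod_bound of_nat_0_less_iff)
    moreover from \<open>int d = (- x) mod int p\<close> have "int p dvd x + int d"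
      by (simp add: dvd_eq_mod_eq_0 mod_add_right_eq)
    ultimately show "d \<in> {d\<in>{..p - 1}. int p dvd x + int d}" by simp
  qed
  then show ?thesis by (simp add: Int_def)
qed

lemma sum_class_moments_residues:
  assumes "p > 0"
  shows "(\<Sum>d\<le>p - 1. class_moment p 1 A (c - int d) 0) = poly A 1"
proof -
  have "(\<Sum>d\<le>p - 1. class_moment p 1 A (c - int d) 0)
      = (\<Sum>j\<le>degree A. coeff A j * (\<Sum>d\<le>p - 1. of_bool (int p dvd (int j - c) + int d)))"
    unfolding class_moment_def sum_distrib_left
    by (subst sum.swap) (intro sum.cong refl, auto simp: class_weight_def algebra_simps)
  also have "\<dots> = poly A 1"
    by (simp only: sum_residue_indicator[OF assms] mult_1_right poly_altdef) simp
  finally show ?thesis .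
qed

text \<open>The coefficients of \<open>(1 - x)^(p-1)\<close> are \<open>\<equiv> 1 (mod p)\<close>, and with all
  coefficients replaced by \<open>1\<close> the moments of \<open>(1 - x)^(K-p+1)\<close> add up to \<open>(1 - 1)^(K-p+1) = 0\<close>;
  so splitting off this factor gains one factor \<open>p\<close>.\<close>

theorem fleck_congruence:
  assumes "prime p" "K \<ge> 1"
  shows "int p ^ ((K - 1) div (p - 1)) dvd class_moment p 1 ([:1, -1:] ^ K) c 0"
  using assms(2)
proof (induction K arbitrary: c rule: less_induct)
  case (less K)
  have p1: "p > 1" using assms(1) by (rule prime_gt_1_nat)
  show ?case
  proof (cases "K < p")
    case True
    with less.prems have "(K - 1) div (p - 1) = 0" by simp
    then show ?thesis by simp
  next
    case False
    define K' where "K' = K - (p - 1)"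
    have K': "K' \<ge> 1" "K' < K" "K = (p - 1) + K'"
      using False p1 less.prems by (auto simp: K'_def)
    have "K - 1 = (K' - 1) + (p - 1)" using K' by simp
    then have exponent: "(K - 1) div (p - 1) = Suc ((K' - 1) div (p - 1))"
      using p1 div_add_self2[of "p - 1" "K' - 1"] by (simp only:)
    let ?B = "[:1, -1:] ^ (p - 1) :: int poly"
    let ?W = "\<lambda>d. class_moment p 1 ([:1, -1:] ^ K') (c - int d) 0"
    have "class_moment p 1 ([:1, -1:] ^ K) c 0 = (\<Sum>d\<le>p - 1. coeff ?B d * ?W d)"
      by (simp add: K'(3) power_add class_moment_mult)
    also have "\<dots> = (\<Sum>d\<le>p - 1. ?W d) + (\<Sum>d\<le>p - 1. (coeff ?B d - 1) * ?W d)"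
      by (simp add: sum.distrib[symmetric] algebra_simps)
    also have "(\<Sum>d\<le>p - 1. ?W d) = 0"
      using sum_class_moments_residues[of p "[:1, -1:] ^ K'" c] p1 K' by simp
    finally have eq: "class_moment p 1 ([:1, -1:] ^ K) c 0 = (\<Sum>d\<le>p - 1. (coeff ?B d - 1) * ?W d)"
      by simp
    have "int p * int p ^ ((K' - 1) div (p - 1)) dvd (coeff ?B d - 1) * ?W d"
      if "d \<le> p - 1" for d
    proof (rule mult_dvd_mono)
      show "int p dvd coeff ?B d - 1"
        using prime_dvd_alt_choose_pred_minus_1[OF assms(1) that]
        by (simp add: coeff_one_minus_x_power)
    qed (rule less.IH[OF K'(2,1)])
    then show ?thesis
      unfolding eq exponent by (auto intro: dvd_sum)
  qed
qed

lemma class_moment_1_dvd: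
  assumes "prime p"
  shows "int p ^ multiplicity p (fact N :: nat) dvd class_moment p 1 ([:1, -1:] ^ N) c e"
proof -
  have p0: "p > 0" using assms by (rule prime_gt_0_nat)
  have "int p ^ multiplicity p (fact N :: nat) dvd alt_binomial_moment (int p) N c 0" for N c
  proof (cases "N = 0")
    case False
    then have "int p ^ multiplicity p (fact N :: nat) dvd int p ^ ((N - 1) div (p - 1))"
      using multiplicity_fact_le[OF assms] by (simp add: le_imp_power_dvd)
    also have "\<dots> dvd alt_binomial_moment (int p) N c 0"
      using fleck_congruence[OF assms, of N c] False class_moment_1_one_minus_x_power[OF p0]
      by simp
    finally show ?thesis .
  qed simp
  then show ?thesis
    unfolding class_moment_1_one_minus_x_power[OF p0] by (rule alt_binomial_moment_dvd[OF assms])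
qed

lemma class_moment_0_dvd:
  assumes "prime p"
  shows "int p ^ (N + multiplicity p (fact N :: nat)) dvd class_moment p 0 ([:1, -1:] ^ N) c e"
proof (cases "e < N")
  case True
  then show ?thesis
    by (simp add: class_moment_0_one_minus_x_power alt_binomial_moment_1_eq_0)
next
  case False
  have "int p ^ multiplicity p (fact N :: nat) dvd alt_binomial_moment 1 N c 0" for N c
    by (cases "N = 0") (simp_all add: alt_binomial_moment_1_eq_0)
  then have "int p ^ multiplicity p (fact N :: nat) dvd alt_binomial_moment 1 N c e"
    by (rule alt_binomial_moment_dvd[OF assms])
  moreover have "int p ^ N dvd int p ^ e" using False by (simp add: le_imp_power_dvd)
  ultimately show ?thesis
    unfolding class_moment_0_one_minus_x_power by (simp add: power_add mult_dvd_mono)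
qed

section \<open>Moments modulo higher powers of \<open>p\<close>\<close>

lemma power_add_split_ends:
  fixes a b :: "'a::comm_semiring_1"
  assumes "n > 0"
  shows "(a + b) ^ n = a ^ n + b ^ n + (\<Sum>k\<in>{1..<n}. of_nat (n choose k) * a ^ k * b ^ (n - k))"
proof -
  have "{..n} = insert 0 (insert n {1..<n})" using assms by auto
  then show ?thesis
    using assms by (simp add: binomial_ring add_ac)
qed

lemma of_nat_prime_dvd_choose:
  assumes "prime p" "0 < k" "k < p"
  shows "(of_nat p :: 'a::comm_semiring_1) dvd of_nat (p choose k)"
proof -
  have "p dvd p choose k" using assms by (intro dvd_choose_prime) auto
  then show ?thesis by (metis dvd_def of_nat_mult)
qed

lemma prime_dvd_power_add_minus:
  fixes a b :: "'a::comm_ring_1"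
  assumes "prime p"
  shows "of_nat p dvd (a + b) ^ p - a ^ p - b ^ p"
proof -
  have "of_nat p dvd (of_nat (p choose k) :: 'a)" if "k \<in> {1..<p}" for k
    using that assms by (simp add: of_nat_prime_dvd_choose)
  then have "of_nat p dvd (\<Sum>k\<in>{1..<p}. of_nat (p choose k) * a ^ k * b ^ (p - k))"
    by (intro dvd_sum) (simp add: mult.assoc)
  then show ?thesis
    using assms by (simp add: power_add_split_ends prime_gt_0_nat)
qed

lemma prime_power_dvd_power_diff:
  fixes x y :: "'a::comm_ring_1"
  assumes "prime p" "j \<ge> 1" "of_nat p ^ j dvd x - y"
  shows "of_nat p ^ Suc j dvd x ^ p - y ^ p"
proof -
  have p2: "p \<ge> 2" using prime_ge_2_nat[OF assms(1)] .
  define t where "t = x - y"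
  have "x ^ p - y ^ p = t ^ p + (\<Sum>k\<in>{1..<p}. of_nat (p choose k) * t ^ k * y ^ (p - k))"
    using power_add_split_ends[of p t y] p2 by (simp add: t_def algebra_simps)
  moreover have "of_nat p ^ Suc j dvd t ^ p"
  proof -
    have "j * 2 \<le> j * p" using p2 by simp
    then have "Suc j \<le> j * p" using assms(2) by linarith
    then have "of_nat p ^ Suc j dvd (of_nat p ^ j :: 'a) ^ p"
      unfolding power_mult[symmetric] by (rule le_imp_power_dvd)
    also have "\<dots> dvd t ^ p" using assms(3) by (simp add: t_def dvd_power_same)
    finally show ?thesis .
  qed
  moreover have "of_nat p ^ Suc j dvd of_nat (p choose k) * t ^ k * y ^ (p - k)"
    if "k \<in> {1..<p}" for k
  proof -
    have "of_nat p dvd (of_nat (p choose k) :: 'a)"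
      using that assms(1) by (simp add: of_nat_prime_dvd_choose)
    moreover have "of_nat p ^ j dvd t ^ k"
      using that assms(3) dvd_power[of k t] unfolding t_def by (auto intro: dvd_trans)
    ultimately have "of_nat p * of_nat p ^ j dvd of_nat (p choose k) * t ^ k"
      by (rule mult_dvd_mono)
    then show ?thesis by simp
  qed
  ultimately show ?thesis by (metis (no_types, lifting) dvd_add dvd_sum)
qed

lemma pcompose_power_left: "(q ^ n) \<circ>\<^sub>p r = (q \<circ>\<^sub>p r) ^ n"
  by (induction n) (simp_all add: pcompose_mult pcompose_1)

theorem one_minus_x_power_prime_power_cong:
  assumes "prime p"
  shows "(of_nat p ^ Suc k :: int poly) dvd
           [:1, -1:] ^ (p ^ Suc k) - ([:1, -1:] ^ (p ^ k)) \<circ>\<^sub>p monom 1 p"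
proof (induction k)
  case 0
  let ?x = "[:0, 1:] :: int poly"
  \<comment> \<open>\<open>x^p + (-x)^p \<equiv> 0 (mod p)\<close> also for \<open>p = 2\<close>: apply the Frobenius congruence to \<open>x + (-x)\<close>.\<close>
  have "[:1, -1:] = 1 + - ?x" by (simp add: one_pCons)
  moreover have "[:1, -1:] \<circ>\<^sub>p monom 1 p = 1 - ?x ^ p"
    by (simp add: pcompose_pCons monom_altdef)
  ultimately have eq: "[:1, -1:] ^ p - [:1, -1:] \<circ>\<^sub>p monom 1 p
      = ((1 + - ?x) ^ p - 1 ^ p - (- ?x) ^ p) - ((?x + - ?x) ^ p - ?x ^ p - (- ?x) ^ p)"
    using prime_gt_0_nat[OF assms] by simp
  have "(of_nat p :: int poly) dvd [:1, -1:] ^ p - [:1, -1:] \<circ>\<^sub>p monom 1 p"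
    unfolding eq by (rule dvd_diff; rule prime_dvd_power_add_minus[OF assms])
  then show ?case by simp
next
  case (Suc k)
  have "[:1, -1:] ^ (p ^ Suc (Suc k)) = ([:1, -1:] ^ (p ^ Suc k) :: int poly) ^ p"
    by (simp add: power_mult[symmetric] mult.commute)
  moreover have "([:1, -1:] ^ (p ^ Suc k)) \<circ>\<^sub>p monom 1 p
      = (([:1, -1:] ^ (p ^ k)) \<circ>\<^sub>p monom 1 p :: int poly) ^ p"
    by (simp add: pcompose_power_left[symmetric] power_mult[symmetric] mult.commute)
  ultimately show ?case
    using prime_power_dvd_power_diff[OF assms _ Suc] by simp
qed

lemma class_moment_mult_pcompose_monom:
  assumes "p > 1"
  shows "class_moment p (Suc a) (B * (A \<circ>\<^sub>p monom 1 p)) c e =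
    (\<Sum>d\<le>degree B. coeff B d *
       (if int p dvd c - int d then class_moment p a A ((c - int d) div int p) e else 0))"
  by (simp add: class_moment_mult class_moment_pcompose_monom[OF assms])

lemma class_moment_mult_pcompose_monom_dvd:
  assumes "p > 1" and A: "\<And>c'. int p ^ K dvd class_moment p a A c' e"
  shows "int p ^ K * t dvd class_moment p (Suc a) (smult t B * (A \<circ>\<^sub>p monom 1 p)) c e"
proof -
  have "int p ^ K dvd class_moment p (Suc a) (B * (A \<circ>\<^sub>p monom 1 p)) c e"
    unfolding class_moment_mult_pcompose_monom[OF assms(1)] by (auto intro!: dvd_sum dvd_mult A)
  then show ?thesis
    by (simp add: class_moment_smult mult.commute mult_dvd_mono)
qed

lemma one_minus_x_power_expansion:
  assumes "prime p" "N = N0 + p ^ Suc a * N'"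
  obtains G where "[:1, -1:] ^ N = (\<Sum>i\<le>N'.
    smult (int (N' choose i) * (int p ^ Suc a) ^ i) ([:1, -1:] ^ N0 * G ^ i) *
      (([:1, -1:] ^ (p ^ a * (N' - i))) \<circ>\<^sub>p monom 1 p))"
proof -
  define Y :: "int poly" where "Y = ([:1, -1:] ^ p ^ a) \<circ>\<^sub>p monom 1 p"
  define s where "s = int p ^ Suc a"
  obtain G where G: "[:1, -1:] ^ p ^ Suc a - Y = of_nat p ^ Suc a * G"
    using one_minus_x_power_prime_power_cong[OF assms(1), of a] unfolding Y_def by blast
  have "(of_nat p ^ Suc a :: int poly) = [:s:]"
    by (simp add: s_def of_nat_poly poly_const_pow)
  with G have split: "[:1, -1:] ^ p ^ Suc a = smult s G + Y"
    by (simp add: algebra_simps)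
  have Y_power: "Y ^ k = ([:1, -1:] ^ (p ^ a * k)) \<circ>\<^sub>p monom 1 p" for k
    by (simp add: Y_def pcompose_power_left power_mult)
  have "[:1, -1:] ^ N = [:1, -1:] ^ N0 * ([:1, -1:] ^ p ^ Suc a) ^ N'"
    by (simp add: assms(2) power_add power_mult)
  also have "\<dots> = [:1, -1:] ^ N0 * (\<Sum>i\<le>N'. of_nat (N' choose i) * (smult s G) ^ i * Y ^ (N' - i))"
    unfolding split by (simp add: binomial_ring)
  also have "\<dots> = (\<Sum>i\<le>N'. smult (int (N' choose i) * s ^ i) ([:1, -1:] ^ N0 * G ^ i) *
      (([:1, -1:] ^ (p ^ a * (N' - i))) \<circ>\<^sub>p monom 1 p))"
    unfolding sum_distrib_left Y_power
    by (intro sum.cong refl) (simp add: of_nat_poly smult_power algebra_simps)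
  finally show ?thesis unfolding s_def by (rule that)
qed

lemma class_moment_leading_term_dvd:
  assumes "prime p"
    and IH: "\<And>N c e. int p ^ (multiplicity p (fact (N div p ^ a) :: nat) + borrows p a c (int N))
                      dvd class_moment p (Suc a) ([:1, -1:] ^ N) c e"
    and N: "N = N0 + p ^ Suc a * N'"
  shows "int p ^ (multiplicity p (fact N' :: nat) + borrows p (Suc a) c (int N)) dvd
           class_moment p (Suc (Suc a)) ([:1, -1:] ^ N0 * (([:1, -1:] ^ (p ^ a * N')) \<circ>\<^sub>p monom 1 p)) c e"
proof -
  have p1: "p > 1" using assms(1) by (rule prime_gt_1_nat)
  let ?M = "p ^ a * N'"
  have "int p ^ (multiplicity p (fact N' :: nat) + borrows p (Suc a) c (int N)) dvd
          coeff ([:1, -1:] ^ N0) d * class_moment p (Suc a) ([:1, -1:] ^ ?M) ((c - int d) div int p) e"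
    if d: "d \<le> N0" "int p dvd c - int d" for d
  proof -
    define c' where "c' = (c - int d) div int p"
    have c: "c = int d + int p * c'" using d(2) by (simp add: c'_def)
    have "borrows p (Suc a) c (int N) \<le> borrows p (Suc a) (int d) (int N0) + borrows p a c' (int ?M)"
      by (rule borrows_Suc_split[OF p1 _ _ c]) (simp_all add: N)
    then have "int p ^ (multiplicity p (fact N' :: nat) + borrows p (Suc a) c (int N)) dvd
        int p ^ borrows p (Suc a) (int d) (int N0) *
        int p ^ (multiplicity p (fact N' :: nat) + borrows p a c' (int ?M))"
      by (simp add: le_imp_power_dvd flip: power_add)
    also have "\<dots> dvd coeff ([:1, -1:] ^ N0) d * class_moment p (Suc a) ([:1, -1:] ^ ?M) c' e"
    proof (rule mult_dvd_mono)
      show "int p ^ borrows p (Suc a) (int d) (int N0) dvd coeff ([:1, -1:] ^ N0) d"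
        using prime_power_borrows_dvd_choose[OF assms(1) d(1)] by (simp add: coeff_one_minus_x_power)
      show "int p ^ (multiplicity p (fact N' :: nat) + borrows p a c' (int ?M))
          dvd class_moment p (Suc a) ([:1, -1:] ^ ?M) c' e"
        using IH[of ?M c' e] p1 by simp
    qed
    finally show ?thesis by (simp add: c'_def)
  qed
  then show ?thesis
    unfolding class_moment_mult_pcompose_monom[OF p1] degree_linear_power_neg
    by (auto intro!: dvd_sum)
qed

lemma multiplicity_fact_le_tail_term:
  assumes "prime p" "1 \<le> i" "i \<le> N"
  shows "multiplicity p (fact N :: nat) + Suc a
           \<le> multiplicity p (fact (N - i) :: nat) + multiplicity p (N choose i) + Suc a * i"
proof -
  have "multiplicity p (fact i :: nat) \<le> i - 1"
    using multiplicity_fact_le[OF assms(1,2)] div_le_dividend order_trans by blast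
  moreover have "i - 1 + Suc a \<le> Suc a * i" using assms(2) by (cases i) auto
  ultimately show ?thesis
    using multiplicity_fact_choose[OF assms(1,3)] by linarith
qed

lemma class_moment_tail_term_dvd:
  assumes "prime p"
    and IH: "\<And>N c e. int p ^ (multiplicity p (fact (N div p ^ a) :: nat) + borrows p a c (int N))
                      dvd class_moment p (Suc a) ([:1, -1:] ^ N) c e"
    and i: "1 \<le> i" "i \<le> N'"
  shows "int p ^ (multiplicity p (fact N' :: nat) + Suc a) dvd
           class_moment p (Suc (Suc a)) (smult (int (N' choose i) * (int p ^ Suc a) ^ i) B *
             (([:1, -1:] ^ (p ^ a * (N' - i))) \<circ>\<^sub>p monom 1 p)) c e"
proof -
  have p1: "p > 1" using assms(1) by (rule prime_gt_1_nat)
  let ?L = "multiplicity p (fact (N' - i) :: nat)"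
  have "int p ^ (multiplicity p (fact N' :: nat) + Suc a)
      dvd int p ^ (?L + multiplicity p (N' choose i) + Suc a * i)"
    using multiplicity_fact_le_tail_term[OF assms(1) i] by (rule le_imp_power_dvd)
  also have "\<dots> dvd int p ^ ?L * (int (N' choose i) * (int p ^ Suc a) ^ i)"
  proof -
    have "int p ^ multiplicity p (N' choose i) dvd int (N' choose i)"
      by (metis multiplicity_dvd of_nat_dvd_iff of_nat_power)
    then show ?thesis
      by (simp only: power_add power_mult mult.assoc) (intro mult_dvd_mono dvd_refl)
  qed
  also have "\<dots> dvd class_moment p (Suc (Suc a)) (smult (int (N' choose i) * (int p ^ Suc a) ^ i) B *
      (([:1, -1:] ^ (p ^ a * (N' - i))) \<circ>\<^sub>p monom 1 p)) c e"
  proof (rule class_moment_mult_pcompose_monom_dvd[OF p1])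
    fix c'
    have "(p ^ a * (N' - i)) div p ^ a = N' - i" using p1 by simp
    with IH[of "p ^ a * (N' - i)" c' e]
    show "int p ^ ?L dvd class_moment p (Suc a) ([:1, -1:] ^ (p ^ a * (N' - i))) c' e"
      by (metis power_add dvd_mult_left)
  qed
  finally show ?thesis .
qed

theorem class_moment_one_minus_x_power_dvd:
  assumes "prime p"
  shows "int p ^ (multiplicity p (fact (N div p ^ a) :: nat) + borrows p a c (int N))
           dvd class_moment p (Suc a) ([:1, -1:] ^ N) c e"
proof (induction a arbitrary: N c e)
  case 0
  then show ?case using class_moment_1_dvd[OF assms] by (simp add: borrows_def)
next
  case (Suc a)
  define N' where "N' = N div p ^ Suc a"
  define N0 where "N0 = N mod p ^ Suc a"
  have N: "N = N0 + p ^ Suc a * N'" by (simp add: N0_def N'_def)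
  obtain G where G: "[:1, -1:] ^ N = (\<Sum>i\<le>N'.
      smult (int (N' choose i) * (int p ^ Suc a) ^ i) ([:1, -1:] ^ N0 * G ^ i) *
        (([:1, -1:] ^ (p ^ a * (N' - i))) \<circ>\<^sub>p monom 1 p))"
    using one_minus_x_power_expansion[OF assms N] by blast
  let ?K = "multiplicity p (fact N' :: nat) + borrows p (Suc a) c (int N)"
  have term_dvd: "int p ^ ?K dvd class_moment p (Suc (Suc a))
      (smult (int (N' choose i) * (int p ^ Suc a) ^ i)
      ([:1, -1:] ^ N0 * G ^ i) * (([:1, -1:] ^ (p ^ a * (N' - i))) \<circ>\<^sub>p monom 1 p)) c e"
    if "i \<le> N'" for i
  proof (cases "i = 0")
    case True
    then show ?thesis
      using class_moment_leading_term_dvd[OF assms Suc.IH N] by simp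
  next
    case False
    have "int p ^ ?K dvd int p ^ (multiplicity p (fact N' :: nat) + Suc a)"
      using borrows_le[of p "Suc a" c "int N"] by (intro le_imp_power_dvd) simp
    also have "\<dots> dvd class_moment p (Suc (Suc a)) (smult (int (N' choose i) * (int p ^ Suc a) ^ i)
        ([:1, -1:] ^ N0 * G ^ i) * (([:1, -1:] ^ (p ^ a * (N' - i))) \<circ>\<^sub>p monom 1 p)) c e"
      using False that by (intro class_moment_tail_term_dvd[OF assms Suc.IH]) auto
    finally show ?thesis .
  qed
  have N': "N div p ^ Suc a = N'" by (simp add: N'_def)
  show ?case
    unfolding G class_moment_sum[OF finite_atMost] N' by (intro dvd_sum term_dvd) simp
qed

section \<open>Reduction to moments\<close>

lemma sum_binomial_bernoulli:
  "(\<Sum>k<u. of_nat (u choose k) * bernoulli k) = of_bool (u = 1)"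
proof (cases "u \<le> 1")
  case True
  then consider "u = 0" | "u = 1" by linarith
  then show ?thesis by cases (auto simp: bernoulli.simps)
next
  case False
  then obtain n where u: "u = Suc n" and n: "n \<ge> 1" by (cases u) auto
  have "bernoulli n = - (\<Sum>k<n. of_nat (Suc n choose k) * bernoulli k) / of_nat (Suc n)"
    using n by (subst bernoulli.simps) simp
  then show ?thesis
    using False by (simp add: u field_simps)
qed

lemma bernpoly_plus_1_diff:
  assumes "m \<ge> 1"
  shows "bernpoly m (x + 1) - bernpoly m x = of_nat m * x ^ (m - 1)"
proof -
  define f where
    "f k i = of_nat (m choose k) * bernoulli k * (of_nat ((m - k) choose i) * x ^ (m - (k + i)))"
    for k i
  have "bernpoly m (x + 1) = (\<Sum>k\<le>m. \<Sum>i\<le>m - k. f k i)"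
    unfolding bernpoly_def f_def
    by (intro sum.cong refl) (simp add: binomial_ring[of 1 x] sum_distrib_left add.commute)
  also have "\<dots> = (\<Sum>(k, i)\<in>{(k, i). k + i \<le> m}. f k i)"
  proof -
    have "{(k, i). k + i \<le> m} = Sigma {..m} (\<lambda>k. {..m - k})" by auto
    then show ?thesis by (simp add: sum.Sigma)
  qed
  also have "\<dots> = (\<Sum>u\<le>m. \<Sum>k\<le>u. f k (u - k))"
    by (rule sum.triangle_reindex_eq)
  also have "\<dots> = (\<Sum>u\<le>m. of_nat (m choose u) * x ^ (m - u) * (\<Sum>k\<le>u. of_nat (u choose k) * bernoulli k))"
  proof (intro sum.cong refl)
    fix u assume "u \<in> {..m}"
    then have "f k (u - k) = of_nat (m choose u) * x ^ (m - u) * (of_nat (u choose k) * bernoulli k)"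
      if "k \<le> u" for k
      using that choose_mult[of k u m] unfolding f_def
      by (simp add: algebra_simps flip: of_nat_mult)
    then show "(\<Sum>k\<le>u. f k (u - k)) = of_nat (m choose u) * x ^ (m - u) *
        (\<Sum>k\<le>u. of_nat (u choose k) * bernoulli k)"
      by (simp add: sum_distrib_left)
  qed
  also have "\<dots> = (\<Sum>u\<le>m. of_nat (m choose u) * x ^ (m - u) * bernoulli u
                     + (if u = 1 then of_nat m * x ^ (m - 1) else 0))"
  proof (intro sum.cong refl)
    fix u
    have "(\<Sum>k\<le>u. of_nat (u choose k) * bernoulli k) = bernoulli u + of_bool (u = 1)"
      using sum_binomial_bernoulli[of u] by (simp add: lessThan_Suc_atMost[symmetric])
    then show "of_nat (m choose u) * x ^ (m - u) * (\<Sum>k\<le>u. of_nat (u choose k) * bernoulli k)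
        = of_nat (m choose u) * x ^ (m - u) * bernoulli u + (if u = 1 then of_nat m * x ^ (m - 1) else 0)"
      by (simp add: algebra_simps)
  qed
  also have "\<dots> = bernpoly m x + of_nat m * x ^ (m - 1)"
    using assms by (simp add: sum.distrib bernpoly_def mult_ac)
  finally show ?thesis by simp
qed

lemma alternating_binomial_sum_Suc:
  fixes g :: "nat \<Rightarrow> 'a::comm_ring_1"
  shows "(\<Sum>k\<le>Suc N. of_nat (Suc N choose k) * (-1) ^ k * g k)
       = - (\<Sum>j\<le>N. (-1) ^ j * of_nat (N choose j) * (g (Suc j) - g j))"
proof -
  define h where "h k = (-1) ^ k * of_nat (N choose k) * g k" for k
  define A where "A = (\<Sum>j\<le>N. h j)"
  define B where "B = (\<Sum>j\<le>N. (-1) ^ j * of_nat (N choose j) * g (Suc j))"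
  have "(\<Sum>k\<le>Suc N. h k) = A" by (simp add: A_def h_def binomial_eq_0)
  moreover have "(\<Sum>k\<le>Suc N. h k) = h 0 + (\<Sum>j\<le>N. h (Suc j))" by (rule sum.atMost_Suc_shift)
  ultimately have h_Suc: "(\<Sum>j\<le>N. h (Suc j)) = A - g 0"
    by (simp add: h_def eq_diff_eq add.commute)
  have "(\<Sum>k\<le>Suc N. of_nat (Suc N choose k) * (-1) ^ k * g k)
       = g 0 + (\<Sum>j\<le>N. of_nat (Suc N choose Suc j) * (-1) ^ Suc j * g (Suc j))"
    by (subst sum.atMost_Suc_shift) simp
  also have "(\<Sum>j\<le>N. of_nat (Suc N choose Suc j) * (-1) ^ Suc j * g (Suc j))
      = (\<Sum>j\<le>N. h (Suc j)) - B"
    unfolding B_def h_def sum_subtractf[symmetric] by (intro sum.cong refl) (simp add: algebra_simps)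
  also have "(\<Sum>j\<le>N. (-1) ^ j * of_nat (N choose j) * (g (Suc j) - g j)) = B - A"
    unfolding A_def B_def h_def sum_subtractf[symmetric]
    by (intro sum.cong refl) (simp add: algebra_simps)
  ultimately show ?thesis by (simp add: h_Suc)
qed

lemma div_eq_pred_div_plus_of_bool:
  fixes x q :: int
  assumes "q > 0"
  shows "x div q = (x - 1) div q + of_bool (q dvd x)"
proof -
  define a r where "a = (x - 1) div q" "r = (x - 1) mod q"
  have x: "x = (r + 1) + a * q" and r: "0 \<le> r" "r < q"
    using assms by (simp_all add: a_r_def)
  show ?thesis
  proof (cases "r + 1 = q")
    case True
    then have "x = (a + 1) * q" using x by (simp add: algebra_simps)
    then show ?thesis
      unfolding a_r_def(1)[symmetric] using assms by simp
  next
    case False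
    then have "(r + 1) div q = 0" "(r + 1) mod q = r + 1" using r by simp_all
    then have "x div q = a" "x mod q = r + 1"
      unfolding x using assms by simp_all
    with r show ?thesis by (simp add: a_r_def[symmetric] dvd_eq_mod_eq_0)
  qed
qed

lemma bernpoly_div_step:
  fixes q r :: int
  assumes "q > 0" "m \<ge> 1"
  shows "bernpoly m (of_int ((int (Suc j) - r) div q)) - bernpoly m (of_int ((int j - r) div q))
       = (if q dvd int j - (r - 1)
          then of_nat m * of_int ((int j - (r - 1)) div q - 1) ^ (m - 1) else 0)"
proof -
  define x where "x = int j - (r - 1)"
  have x: "int (Suc j) - r = x" "int j - r = x - 1" by (simp_all add: x_def)
  have "x div q = (x - 1) div q + of_bool (q dvd x)"
    by (rule div_eq_pred_div_plus_of_bool[OF assms(1)])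
  moreover have "bernpoly m (of_int ((x - 1) div q) + 1) - bernpoly m (of_int ((x - 1) div q))
      = of_nat m * of_int ((x - 1) div q) ^ (m - 1)"
    by (rule bernpoly_plus_1_diff[OF assms(2)])
  ultimately show ?thesis
    unfolding x x_def[symmetric] by auto
qed

lemma moment_sum_eq_class_moments:
  fixes p \<alpha> N m :: nat and s :: int
  shows "(\<Sum>j\<le>N. if int p ^ \<alpha> dvd int j - s
            then (-1) ^ j * int (N choose j) * (int p * ((int j - s) div int p ^ \<alpha>) - int p) ^ m else 0)
       = (\<Sum>i\<le>m. int (m choose i) * (- int p) ^ (m - i) * class_moment p \<alpha> ([:1, -1:] ^ N) s i)"
proof -
  define b where "b j = (int p ^ \<alpha> dvd int j - s)" for j
  define y where "y j = int p * ((int j - s) div int p ^ \<alpha>)" for j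
  have moment: "class_moment p \<alpha> ([:1, -1:] ^ N) s i
      = (\<Sum>j\<le>N. (-1) ^ j * int (N choose j) * (if b j then y j ^ i else 0))" for i
    unfolding class_moment_def coeff_one_minus_x_power class_weight_def b_def y_def by simp
  have "(\<Sum>j\<le>N. if b j then (-1) ^ j * int (N choose j) * (y j - int p) ^ m else 0)
      = (\<Sum>j\<le>N. \<Sum>i\<le>m. int (m choose i) * (- int p) ^ (m - i) *
                  ((-1) ^ j * int (N choose j) * (if b j then y j ^ i else 0)))"
    using binomial_ring[of "y _" "- int p" m]
    by (intro sum.cong refl) (simp add: sum_distrib_left algebra_simps)
  also have "\<dots> = (\<Sum>i\<le>m. int (m choose i) * (- int p) ^ (m - i) * class_moment p \<alpha> ([:1, -1:] ^ N) s i)"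
    unfolding moment sum_distrib_left by (rule sum.swap)
  finally show ?thesis unfolding b_def y_def .
qed

lemma alternating_bernpoly_div_sum:
  fixes q r :: int
  assumes "q > 0" "m \<ge> 1"
  shows "(\<Sum>k\<le>Suc N. of_nat (Suc N choose k) * (-1) ^ k * bernpoly m (of_int ((int k - r) div q)))
       = - (\<Sum>j\<le>N. (-1) ^ j * of_nat (N choose j) *
              (if q dvd int j - (r - 1)
               then of_nat m * of_int ((int j - (r - 1)) div q - 1) ^ (m - 1) else 0))"
  by (subst alternating_binomial_sum_Suc) (simp only: bernpoly_div_step[OF assms])

theorem bernoulli_sum_eq_class_moments:
  fixes p \<alpha> m n :: nat and r :: int
  assumes "p > 0" "m \<ge> 1" "n \<ge> 1"
  shows "of_nat p ^ (m - 1) / of_nat m *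
           (\<Sum>k\<le>n. of_nat (n choose k) * (-1) ^ k *
              bernpoly m (of_int \<lfloor>of_int (int k - r) / (of_nat p ^ \<alpha> :: rat)\<rfloor>))
       = of_int (- (\<Sum>i\<le>m - 1. int ((m - 1) choose i) * (- int p) ^ (m - 1 - i) *
                     class_moment p \<alpha> ([:1, -1:] ^ (n - 1)) (r - 1) i))"
proof -
  define q where "q = int p ^ \<alpha>"
  define N where "N = n - 1"
  define s where "s = r - 1"
  have q: "q > 0" using assms(1) by (simp add: q_def)
  have "\<lfloor>of_int (int k - r) / (of_nat p ^ \<alpha> :: rat)\<rfloor> = (int k - r) div q" for k
    by (metis floor_divide_of_int_eq of_int_of_nat_eq of_int_power q_def)
  then have sum: "(\<Sum>k\<le>n. of_nat (n choose k) * (-1) ^ k *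
       bernpoly m (of_int \<lfloor>of_int (int k - r) / (of_nat p ^ \<alpha> :: rat)\<rfloor>))
      = - (\<Sum>j\<le>N. (-1) ^ j * of_nat (N choose j) *
             (if q dvd int j - s then of_nat m * of_int ((int j - s) div q - 1) ^ (m - 1) else 0))"
    unfolding N_def s_def using assms(3) alternating_bernpoly_div_sum[OF q assms(2), of "n - 1" r]
    by simp
  have "of_nat p ^ (m - 1) / of_nat m * ((-1) ^ j * of_nat (N choose j) *
      (if q dvd int j - s then of_nat m * of_int ((int j - s) div q - 1) ^ (m - 1) else 0))
     = (of_int (if q dvd int j - s then (-1) ^ j * int (N choose j) *
          (int p * ((int j - s) div q) - int p) ^ (m - 1) else 0) :: rat)" for j
  proof -
    have "(int p * ((int j - s) div q) - int p) ^ (m - 1)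
        = int p ^ (m - 1) * ((int j - s) div q - 1) ^ (m - 1)"
      by (simp add: algebra_simps flip: power_mult_distrib)
    then show ?thesis using assms(2) by (simp add: field_simps)
  qed
  then have "of_nat p ^ (m - 1) / of_nat m * (\<Sum>k\<le>n. of_nat (n choose k) * (-1) ^ k *
       bernpoly m (of_int \<lfloor>of_int (int k - r) / (of_nat p ^ \<alpha> :: rat)\<rfloor>))
      = of_int (- (\<Sum>j\<le>N. if q dvd int j - s then (-1) ^ j * int (N choose j) *
          (int p * ((int j - s) div q) - int p) ^ (m - 1) else 0))"
    unfolding sum mult_minus_right sum_distrib_left by simp
  then show ?thesis
    unfolding q_def moment_sum_eq_class_moments N_def s_def .
qed

section \<open>The \<open>p\<close>-adic estimate\<close>

lemma padic_ord_of_int_ge: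
  assumes "prime p" "int p ^ B dvd z"
  shows "padic_ord p (of_int z) \<ge> ereal (real B)"
proof (cases "z = 0")
  case False
  have "\<not> is_unit (int p)" using assms(1) by auto
  then have "B \<le> multiplicity (int p) z"
    using power_dvd_iff_le_multiplicity[OF False] assms(2) by simp
  then show ?thesis using False by (simp add: padic_ord_def quotient_of_int)
qed (simp add: padic_ord_def)

lemma sums_div_prime_powers:
  assumes "prime p"
  shows "(\<lambda>j. real (M div p ^ Suc j)) sums real (multiplicity p (fact M :: nat))"
proof -
  have "(\<lambda>j. real (M div p ^ Suc j)) sums (\<Sum>j<M. real (M div p ^ Suc j))"
  proof (rule sums_finite)
    fix j assume "j \<notin> {..<M}"
    then have "M < p ^ Suc j"
      using power_gt_expt[of p "Suc j"] prime_gt_1_nat[OF assms] by simp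
    then show "real (M div p ^ Suc j) = 0" by simp
  qed simp
  also have "(\<Sum>j<M. real (M div p ^ Suc j)) = real (multiplicity p (fact M :: nat))"
    using legendre_multiplicity_fact[OF assms order_refl, of M]
    by (simp add: sum.atLeast1_atMost_eq)
  finally show ?thesis .
qed

lemma lres_of_nat_power:
  assumes "p > 0"
  shows "lres a (real p powr real k) = of_int (a mod int (p ^ k))"
proof -
  have "real p powr real k = real_of_int (int (p ^ k))"
    using assms by (simp add: powr_realpow)
  then show ?thesis
    unfolding lres_def by (simp only: floor_divide_of_int_eq)
      (simp only: minus_mult_div_eq_mod[symmetric] of_int_diff of_int_mult)
qed

lemma lres_inverse:
  assumes "p > 0"
  shows "lres a (1 / real p) = 0"
proof -
  have "real_of_int a / (1 / real p) = real_of_int (a * int p)" by simp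
  then show ?thesis using assms by (simp add: lres_def)
qed

lemma mod_add_carry_iff:
  fixes a b q :: int
  assumes "q > 0"
  shows "q \<le> a mod q + b mod q \<longleftrightarrow> (a + b) mod q < a mod q"
proof -
  define A B where "A = a mod q" "B = b mod q"
  have bounds: "0 \<le> A" "A < q" "0 \<le> B" "B < q" using assms by (simp_all add: A_B_def)
  have "(a + b) mod q = (A + B) mod q" by (simp add: A_B_def mod_add_eq)
  also have "\<dots> = (if q \<le> A + B then A + B - q else A + B)"
  proof (cases "q \<le> A + B")
    case True
    have "(A + B) mod q = (A + B - q + q) mod q" by simp
    also have "\<dots> = A + B - q"
      unfolding mod_add_self2 using True bounds by (intro mod_pos_pos_trivial) auto
    finally show ?thesis using True by simp
  qed (use bounds in simp)
  finally show ?thesis using bounds unfolding A_B_def[symmetric] by auto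
qed

lemma carry_digit_iff:
  fixes p a :: nat and s N :: int
  assumes "p > 1"
  defines "x \<equiv> nat (s mod int (p ^ a))" and "y \<equiv> nat ((N - s) mod int (p ^ a))"
  shows "p ^ Suc i \<le> x mod p ^ Suc i + y mod p ^ Suc i \<longleftrightarrow>
           Suc i \<le> a \<and> N mod int p ^ Suc i < s mod int p ^ Suc i"
proof -
  have x: "int x = s mod int (p ^ a)" and y: "int y = (N - s) mod int (p ^ a)"
    using assms by (simp_all add: x_def y_def)
  show ?thesis
  proof (cases "Suc i \<le> a")
    case True
    define Q where "Q = int p ^ Suc i"
    have Q: "Q > 0" using assms by (simp add: Q_def)
    have "Q dvd int (p ^ a)" unfolding Q_def of_nat_power by (rule le_imp_power_dvd[OF True])
    then have "int (x mod p ^ Suc i) = s mod Q" "int (y mod p ^ Suc i) = (N - s) mod Q"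
      by (simp_all add: Q_def zmod_int x y mod_mod_cancel)
    moreover have "int (p ^ Suc i) = Q" by (simp add: Q_def)
    ultimately have "p ^ Suc i \<le> x mod p ^ Suc i + y mod p ^ Suc i \<longleftrightarrow> Q \<le> s mod Q + (N - s) mod Q"
      by (metis of_nat_add of_nat_le_iff)
    also have "\<dots> \<longleftrightarrow> N mod Q < s mod Q"
      using mod_add_carry_iff[OF Q, of s "N - s"] by simp
    finally show ?thesis using True by (simp add: Q_def)
  next
    case False
    have "x < p ^ a" "y < p ^ a"
      using assms x y by (simp_all add: x_def y_def nat_less_iff)
    moreover have "2 * p ^ a \<le> p ^ Suc a" using assms by simp
    moreover have "p ^ Suc a \<le> p ^ Suc i"
      using False assms by (intro power_increasing) auto
    ultimately have "x + y < p ^ Suc i" by linarith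
    then show ?thesis using False by simp
  qed
qed

theorem carries_eq_borrows:
  assumes "p > 1"
  shows "carries p (nat (s mod int (p ^ a))) (nat ((N - s) mod int (p ^ a))) = borrows p a s N"
proof -
  let ?x = "nat (s mod int (p ^ a))" and ?y = "nat ((N - s) mod int (p ^ a))"
  let ?B = "{k\<in>{1..a}. N mod int p ^ k < s mod int p ^ k}"
  have "{i. p ^ (i + 1) \<le> ?x mod p ^ (i + 1) + ?y mod p ^ (i + 1)} = (\<lambda>k. k - 1) ` ?B"
  proof (intro equalityI subsetI)
    fix i assume "i \<in> {i. p ^ (i + 1) \<le> ?x mod p ^ (i + 1) + ?y mod p ^ (i + 1)}"
    then have "Suc i \<in> ?B" using carry_digit_iff[OF assms, of i s a N] by simp
    then show "i \<in> (\<lambda>k. k - 1) ` ?B" by (rule rev_image_eqI) simp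
  next
    fix i assume "i \<in> (\<lambda>k. k - 1) ` ?B"
    then obtain k where "k \<in> ?B" "i = k - 1" by auto
    then have "k = Suc i" "Suc i \<in> ?B" by auto
    then show "i \<in> {i. p ^ (i + 1) \<le> ?x mod p ^ (i + 1) + ?y mod p ^ (i + 1)}"
      using carry_digit_iff[OF assms, of i s a N] by simp
  qed
  then have "carries p ?x ?y = card ((\<lambda>k. k - 1) ` ?B)"
    unfolding carries_def by simp
  also have "\<dots> = card ?B" by (rule card_image) (auto simp: inj_on_def)
  finally show ?thesis by (simp add: borrows_def)
qed

fun moment_exponent :: "nat \<Rightarrow> nat \<Rightarrow> nat \<Rightarrow> int \<Rightarrow> nat" where
  "moment_exponent p 0 N s = N + multiplicity p (fact N :: nat)"
| "moment_exponent p (Suc a) N s = multiplicity p (fact (N div p ^ a) :: nat) + borrows p a s (int N)"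

lemma class_moment_dvd:
  assumes "prime p"
  shows "int p ^ moment_exponent p \<alpha> N s dvd class_moment p \<alpha> ([:1, -1:] ^ N) s e"
  using assms by (cases \<alpha>) (simp_all add: class_moment_0_dvd class_moment_one_minus_x_power_dvd)

lemma moment_exponent_eq:
  assumes "prime p"
  shows "(\<Sum>j. real (N div p ^ (j + \<alpha>)))
           + real (carries p (nat \<lfloor>lres s (real p powr (real \<alpha> - 1))\<rfloor>)
                             (nat \<lfloor>lres (int N - s) (real p powr (real \<alpha> - 1))\<rfloor>))
         = real (moment_exponent p \<alpha> N s)"
proof (cases \<alpha>)
  case 0
  have "(\<lambda>j. real (N div p ^ j)) sums (real (multiplicity p (fact N :: nat)) + real (N div p ^ 0))"
    by (rule sums_Suc_iff[THEN iffD1]) (use sums_div_prime_powers[OF assms, of N] in simp)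
  moreover have "carries p 0 0 = 0"
    using prime_gt_0_nat[OF assms] by (simp add: carries_def)
  moreover have "real p powr (real \<alpha> - 1) = 1 / real p"
    using 0 by (simp add: powr_minus_divide)
  ultimately show ?thesis
    using 0 prime_gt_0_nat[OF assms] by (simp add: lres_inverse sums_unique[symmetric])
next
  case (Suc a)
  have "N div p ^ (j + Suc a) = N div p ^ a div p ^ Suc j" for j
  proof -
    have "p ^ (j + Suc a) = p ^ (a + Suc j)" by (simp add: add.commute)
    also have "\<dots> = p ^ a * p ^ Suc j" by (rule power_add)
    finally have "p ^ (j + Suc a) = p ^ a * p ^ Suc j" .
    then show ?thesis by (simp only: div_mult2_eq)
  qed
  then have "(\<lambda>j. real (N div p ^ (j + \<alpha>))) sums real (multiplicity p (fact (N div p ^ a) :: nat))"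
    using sums_div_prime_powers[OF assms] Suc by simp
  moreover have "real p powr (real \<alpha> - 1) = real p powr real a" using Suc by simp
  then have "nat \<lfloor>lres x (real p powr (real \<alpha> - 1))\<rfloor> = nat (x mod int (p ^ a))" for x
    using prime_gt_0_nat[OF assms] by (simp add: lres_of_nat_power)
  ultimately show ?thesis
    using carries_eq_borrows[OF prime_gt_1_nat[OF assms], of s a "int N"] Suc
    by (simp add: sums_unique[symmetric])
qed

theorem corollary1p1:
  fixes p \<alpha> m n :: nat and r :: int
  assumes "prime p" and "m > 0" and "n > 0"
  shows "padic_ord p
           (of_nat p ^ (m - 1) / of_nat m *
             (\<Sum>k\<le>n. of_nat (n choose k) * (-1) ^ k *
                bernpoly m (of_int \<lfloor>of_int (int k - r) / (of_nat p ^ \<alpha> :: rat)\<rfloor>)))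
         \<ge> ereal ((\<Sum>j. real ((n - 1) div p ^ (j + \<alpha>)))
              + real (carries p (nat \<lfloor>lres (r - 1) (real p powr (real \<alpha> - 1))\<rfloor>)
                                  (nat \<lfloor>lres (int n - r) (real p powr (real \<alpha> - 1))\<rfloor>)))"
proof -
  let ?K = "moment_exponent p \<alpha> (n - 1) (r - 1)"
  have "int n - r = int (n - 1) - (r - 1)" using assms(3) by simp
  then have exponent: "(\<Sum>j. real ((n - 1) div p ^ (j + \<alpha>)))
        + real (carries p (nat \<lfloor>lres (r - 1) (real p powr (real \<alpha> - 1))\<rfloor>)
                          (nat \<lfloor>lres (int n - r) (real p powr (real \<alpha> - 1))\<rfloor>))
      = real ?K"
    by (simp only: moment_exponent_eq[OF assms(1)])
  have "int p ^ ?K dvd class_moment p \<alpha> ([:1, -1:] ^ (n - 1)) (r - 1) i" for i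
    by (rule class_moment_dvd[OF assms(1)])
  then have "int p ^ ?K dvd - (\<Sum>i\<le>m - 1. int ((m - 1) choose i) * (- int p) ^ (m - 1 - i) *
      class_moment p \<alpha> ([:1, -1:] ^ (n - 1)) (r - 1) i)"
    by (auto intro: dvd_sum)
  then show ?thesis
    using assms(2,3) unfolding exponent
    by (subst bernoulli_sum_eq_class_moments[OF prime_gt_0_nat[OF assms(1)]])
       (simp_all only: padic_ord_of_int_ge[OF assms(1)] Suc_le_eq)
qed

end
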